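(* Let $\mathcal P=\{p_0,\dots,p_6\}$ be a typical heptagonal $7$-configuration with a cyclic numeration, indices taken modulo $7$, and let $0\le i\le 6$. Then: (a) $d_{i,j}+d_{i+1,j}=1$ for all $0\le j\le 6$ with $j\ne i,i+1$; (b) if $d(p_i)\ne 0,6$, then $d_{i,i+1}=d_{i+1,i}$ and $d_{i-1,i}=d_{i,i-1}$; (c) if $d(p_i)\ne 0,6$, then $d_{i-1,i}\ne d_{i,i+1}$.
   Context: A $7$-configuration is a set of $7$ distinct points in $\mathbb{RP}^2$; it is typical if no three of its points are collinear and no six lie on a common conic. It is heptagonal if there is a line $\ell$ disjoint from it such that its points are the vertices of a convex heptagon in the affine plane $\mathbb{RP}^2\smallsetminus\ell$; a cyclic numeration $p_0,\dots,p_6$ lists the points as consecutive vertices of this heptagon. For $i\ne j$ let $Q_{i,j}$ be the conic through the five points of $\mathcal P\smallsetminus\{p_i,p_j\}$, and set $d_{i,j}=0$ if $p_i$ lies inside $Q_{i,j}$ and $d_{i,j}=1$ if $p_i$ lies outside $Q_{i,j}$ ("inside" = the component of the complement of the conic homeomorphic to a disc). The dominance index is $d(p_i)=\sum_{j\ne i}d_{i,j}$. *)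

theory Defs
  imports "HOL-Analysis.Analysis"
begin

text \<open>Points of RP^2 are represented by nonzero vectors of real^3 (homogeneous
coordinates).  A 7-configuration with a numeration is a map from the index type 7
(integers mod 7) to real^3.\<close>

definition mat3 :: "real^3 \<Rightarrow> real^3 \<Rightarrow> real^3 \<Rightarrow> real^3^3" where
  "mat3 a b c = (\<chi> r. if r = 1 then a else if r = 2 then b else c)"

definition det3 :: "real^3 \<Rightarrow> real^3 \<Rightarrow> real^3 \<Rightarrow> real" where
  "det3 a b c = det (mat3 a b c)"

text \<open>Quadratic form of a symmetric matrix; a conic is the zero set of a nonzero
quadratic form (matrix up to nonzero scaling).\<close>

definition qf :: "real^3^3 \<Rightarrow> real^3 \<Rightarrow> real" where
  "qf A x = x \<bullet> (A *v x)"

definition conic_through :: "real^3^3 \<Rightarrow> (real^3) set \<Rightarrow> bool" where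
  "conic_through A S \<longleftrightarrow> transpose A = A \<and> A \<noteq> 0 \<and> (\<forall>x\<in>S. qf A x = 0)"

definition config7 :: "(7 \<Rightarrow> real^3) \<Rightarrow> bool" where
  "config7 p \<longleftrightarrow> (\<forall>k. p k \<noteq> 0) \<and> (\<forall>a b. a \<noteq> b \<longrightarrow> \<not> (\<exists>c. p a = c *\<^sub>R p b))"

definition typical7 :: "(7 \<Rightarrow> real^3) \<Rightarrow> bool" where
  "typical7 p \<longleftrightarrow> config7 p
     \<and> (\<forall>a b c. a \<noteq> b \<and> a \<noteq> c \<and> b \<noteq> c \<longrightarrow> det3 (p a) (p b) (p c) \<noteq> 0)
     \<and> (\<forall>m. \<not> (\<exists>A. conic_through A (p ` (UNIV - {m}))))"

text \<open>Affine chart of RP^2 minus the line {x. w \<bullet> x = 0}: the point x is sent to the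
representative lying on the affine plane {y. w \<bullet> y = 1}.  In that plane det3 of three
points is a nonzero multiple (fixed sign) of their oriented area.\<close>

definition aff :: "real^3 \<Rightarrow> real^3 \<Rightarrow> real^3" where
  "aff w x = (1 / (w \<bullet> x)) *\<^sub>R x"

text \<open>Heptagonal with cyclic numeration p 0, ..., p 6: there is a line (w \<noteq> 0)
missing all points such that in the affine plane the points p k are consecutive vertices
of a convex heptagon, i.e. for every edge (p k, p (k+1)) all other vertices lie strictly
on the same side, with a consistent orientation \<sigma>.\<close>

definition heptagonal_cyclic :: "(7 \<Rightarrow> real^3) \<Rightarrow> bool" where
  "heptagonal_cyclic p \<longleftrightarrow> (\<exists>w \<sigma>. w \<noteq> 0 \<and> \<sigma> \<in> {1, -1::real} \<and> (\<forall>k. w \<bullet> p k \<noteq> 0)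
     \<and> (\<forall>k m. m \<noteq> k \<and> m \<noteq> k + 1 \<longrightarrow>
            \<sigma> * det3 (aff w (p k)) (aff w (p (k + 1))) (aff w (p m)) > 0))"

text \<open>Q_{i,j}: the conic through the five points other than p i, p j
(unique up to scaling for a typical configuration).\<close>

definition Qconic :: "(7 \<Rightarrow> real^3) \<Rightarrow> 7 \<Rightarrow> 7 \<Rightarrow> real^3^3" where
  "Qconic p i j = (SOME A. conic_through A (p ` (UNIV - {i, j})))"

text \<open>Outside of a nondegenerate real conic with matrix A: the non-disc component of the
complement.  For signature (2,1) or (1,2) the disc component is where qf A x has the
sign of det A, so x lies outside iff qf A x * det A < 0 (independent of scaling of A
and of the representative x).\<close>

definition outside_conic :: "real^3^3 \<Rightarrow> real^3 \<Rightarrow> bool" where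
  "outside_conic A x \<longleftrightarrow> qf A x * det A < 0"

definition dd :: "(7 \<Rightarrow> real^3) \<Rightarrow> 7 \<Rightarrow> 7 \<Rightarrow> nat" where
  "dd p i j = (if outside_conic (Qconic p i j) (p i) then 1 else 0)"

definition dom_index :: "(7 \<Rightarrow> real^3) \<Rightarrow> 7 \<Rightarrow> nat" where
  "dom_index p i = (\<Sum>j \<in> UNIV - {i}. dd p i j)"

end

(*
  Rescale the representatives so that every edge bracket det3 (q k) (q (k + 1)) (q m) is
  positive; then the sign of any bracket of three vertices is the sign of the cyclic order of
  their indices.  The quadratic transformation based at three points a, b, c maps a conic A
  through a, b, c, d, e to the line through the images of d and e, so whether x lies outside A
  becomes the sign of det3 (cremona d) (cremona e) (cremona x) times a product of brackets.

  (a) If x and y lie on the same side of each of the six lines joining four points, then x is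
  outside the conic through the four points and y exactly when y is inside the conic through
  the four points and x.  Two adjacent vertices, and the two neighbours of a vertex, are such
  pairs.

  (b) For the remaining points x, y, z of the configuration, the Cremona determinants satisfy a
  three-term linear identity whose coefficients are the values of the line pair (ab)(cd), so
  the three terms cannot have one common sign.  With x = p_i, y = p_(i+1) and a z for which
  d_(i,z) and d_(i,i+1) differ (such a z exists unless d(p_i) is 0 or 6), this forces
  d_(i,i+1) = d_(i+1,i).  Reversing the numeration gives the second equality, and (c) follows
  from it and from (a) applied to p_(i-1) and p_(i+1).
*)

theory Submission
  imports Defs
begin

unbundle cross3_syntax

section \<open>Brackets and quadratic forms\<close>

lemma det3_expand:
  "det3 a b c = a$1*b$2*c$3 + a$2*b$3*c$1 + a$3*b$1*c$2 - a$1*b$3*c$2 - a$2*b$1*c$3 - a$3*b$2*c$1"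
  unfolding det3_def det_3 mat3_def by (simp add: algebra_simps)

lemma det3_rotate: "det3 b c a = det3 a b c"
  unfolding det3_expand by (simp add: algebra_simps)

lemma det3_swap: "det3 b a c = - det3 a b c"
  unfolding det3_expand by (simp add: algebra_simps)

lemma det3_swap23: "det3 a c b = - det3 a b c"
  unfolding det3_expand by (simp add: algebra_simps)

lemma det3_repeat: "det3 a a b = 0" "det3 a b a = 0" "det3 a b b = 0"
  unfolding det3_expand by (simp_all add: algebra_simps)

lemma det3_add3: "det3 a b (x + y) = det3 a b x + det3 a b y"
  unfolding det3_expand by (simp add: algebra_simps)

lemma det3_eq_cross: "det3 a b x = (a \<times> b) \<bullet> x"
  unfolding det3_expand cross3_def inner_vec_def sum_3 by (simp add: algebra_simps)

lemma det3_scaleR: "det3 (r *\<^sub>R a) (s *\<^sub>R b) (t *\<^sub>R c) = r * s * t * det3 a b c"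
  unfolding det3_expand by (simp add: algebra_simps)

lemma det3_uminus: "det3 (- a) (- b) (- c) = - det3 a b c"
  unfolding det3_expand by (simp add: algebra_simps)

lemma cramer3: "det3 a b c *\<^sub>R x = det3 x b c *\<^sub>R a + det3 a x c *\<^sub>R b + det3 a b x *\<^sub>R c"
  unfolding vec_eq_iff forall_3 det3_expand by (simp add: algebra_simps)

lemma det3_pos_fan_trans:
  assumes "0 \<le> det3 a e u" "0 < det3 a e v" "0 < det3 a e w" "0 < det3 a u v" "0 < det3 a v w"
  shows "0 < det3 a u w"
proof -
  have "det3 a e v * det3 a u w = det3 a e u * det3 a v w + det3 a e w * det3 a u v"
    unfolding det3_expand by (simp add: algebra_simps)
  also have "\<dots> > 0" using assms by (simp add: add_nonneg_pos)
  finally show ?thesis using assms(2) by (simp add: zero_less_mult_iff)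
qed

definition polar :: "real^3^3 \<Rightarrow> real^3 \<Rightarrow> real^3 \<Rightarrow> real" where
  "polar A x y = x \<bullet> (A *v y)"

lemma polar_expand:
  "polar A x y = x$1*(A$1$1*y$1 + A$1$2*y$2 + A$1$3*y$3) + x$2*(A$2$1*y$1 + A$2$2*y$2 + A$2$3*y$3)
     + x$3*(A$3$1*y$1 + A$3$2*y$2 + A$3$3*y$3)"
  by (simp add: polar_def inner_vec_def matrix_vector_mult_def sum_3)

lemma qf_eq_polar: "qf A x = polar A x x"
  by (simp add: qf_def polar_def)

lemma qf_scaleR: "qf A (r *\<^sub>R x) = r\<^sup>2 * qf A x"
  unfolding qf_eq_polar polar_expand by (simp add: algebra_simps power2_eq_square)

lemma qf_uminus: "qf A (- x) = qf A x"
  using qf_scaleR[of A "-1" x] by simp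

lemma qf_diff: "qf (A - B) x = qf A x - qf B x"
  unfolding qf_eq_polar polar_expand by (simp add: algebra_simps)

lemma qf_scaleR_matrix: "qf (r *\<^sub>R A) x = r * qf A x"
  unfolding qf_eq_polar polar_expand by (simp add: algebra_simps)

lemma symmetric_entries:
  assumes "transpose A = A"
  shows "A$2$1 = A$1$2" "A$3$1 = A$1$3" "A$3$2 = A$2$3"
  using assms by (metis transpose_def vec_lambda_beta)+

lemma polar_commute: "transpose A = A \<Longrightarrow> polar A y x = polar A x y"
  unfolding polar_expand by (simp add: symmetric_entries algebra_simps)

lemma qf_lincomb3:
  assumes "transpose A = A"
  shows "qf A (r1 *\<^sub>R a + r2 *\<^sub>R b + r3 *\<^sub>R c) = r1\<^sup>2 * qf A a + r2\<^sup>2 * qf A b + r3\<^sup>2 * qf A c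
     + 2 * r1 * r2 * polar A a b + 2 * r1 * r3 * polar A a c + 2 * r2 * r3 * polar A b c"
  unfolding qf_eq_polar polar_expand symmetric_entries[OF assms] vector_add_component
    vector_scaleR_component real_scaleR_def
  by algebra

lemma symmetric_eq_0_if_qf_eq_0:
  assumes "transpose A = A" and "\<And>x. qf A x = 0"
  shows "A = 0"
proof -
  note s = symmetric_entries[OF assms(1)]
  note q = assms(2)[unfolded qf_eq_polar polar_expand]
  have d: "A$1$1 = 0" "A$2$2 = 0" "A$3$3 = 0"
    using q[of "vector [1,0,0]"] q[of "vector [0,1,0]"] q[of "vector [0,0,1]"] by simp_all
  have "A$1$2 = 0" "A$1$3 = 0" "A$2$3 = 0"
    using q[of "vector [1,1,0]"] q[of "vector [1,0,1]"] q[of "vector [0,1,1]"] d s by simp_all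
  with d s show ?thesis unfolding vec_eq_iff forall_3 by simp
qed

section \<open>Conics through a fixed frame\<close>

(* The standard quadratic transformation with fundamental points a, b, c, written in the
   coordinates of the frame (a, b, c). *)
definition cremona :: "real^3 \<Rightarrow> real^3 \<Rightarrow> real^3 \<Rightarrow> real^3 \<Rightarrow> real^3" where
  "cremona a b c u = vector [det3 u b c * det3 a u c, det3 u b c * det3 a b u, det3 a u c * det3 a b u]"

definition cremona_line :: "real^3^3 \<Rightarrow> real^3 \<Rightarrow> real^3 \<Rightarrow> real^3 \<Rightarrow> real^3" where
  "cremona_line A a b c = vector [polar A a b, polar A a c, polar A b c]"

lemma qf_cremona_frame:
  assumes "transpose A = A" "qf A a = 0" "qf A b = 0" "qf A c = 0"
  shows "(det3 a b c)\<^sup>2 * qf A x = 2 * (cremona_line A a b c \<bullet> cremona a b c x)"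
proof -
  have "(det3 a b c)\<^sup>2 * qf A x = qf A (det3 x b c *\<^sub>R a + det3 a x c *\<^sub>R b + det3 a b x *\<^sub>R c)"
    by (simp add: qf_scaleR flip: cramer3)
  also have "\<dots> = 2 * (cremona_line A a b c \<bullet> cremona a b c x)"
    unfolding qf_lincomb3[OF assms(1)] assms(2-4)
    by (simp add: cremona_def cremona_line_def inner_vec_def sum_3 algebra_simps)
  finally show ?thesis .
qed

lemma det_cremona_frame:
  assumes "transpose A = A" "qf A a = 0" "qf A b = 0" "qf A c = 0"
  shows "(det3 a b c)\<^sup>2 * det A
    = 2 * (cremona_line A a b c)$1 * (cremona_line A a b c)$2 * (cremona_line A a b c)$3"
proof -
  let ?M = "mat3 a b c"
  have entry: "(?M ** A ** transpose ?M) $ i $ j = polar A (?M$i) (?M$j)" for i j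
    unfolding polar_expand matrix_matrix_mult_def transpose_def by (simp add: sum_3 algebra_simps)
  have rows: "?M$1 = a" "?M$2 = b" "?M$3 = c" by (simp_all add: mat3_def)
  have "(det3 a b c)\<^sup>2 * det A = det (?M ** A ** transpose ?M)"
    by (simp add: det_mul det_transpose det3_def power2_eq_square)
  also have "\<dots> = 2 * polar A a b * polar A a c * polar A b c"
    unfolding det_3 entry rows qf_eq_polar[symmetric] assms(2-4)
      polar_commute[OF assms(1), of b a] polar_commute[OF assms(1), of c a]
      polar_commute[OF assms(1), of c b]
    by (simp add: algebra_simps)
  finally show ?thesis by (simp add: cremona_line_def)
qed

lemma parallel_cross_if_orthogonal:
  fixes v d e :: "real^3"
  assumes "v \<bullet> d = 0" "v \<bullet> e = 0"
  shows "((d \<times> e) \<bullet> (d \<times> e)) *\<^sub>R v = ((d \<times> e) \<bullet> v) *\<^sub>R (d \<times> e)"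
proof -
  have "v \<times> (d \<times> e) = 0" using assms by (simp add: Lagrange)
  moreover have "(d \<times> e) \<times> (v \<times> (d \<times> e))
      = ((d \<times> e) \<bullet> (d \<times> e)) *\<^sub>R v - ((d \<times> e) \<bullet> v) *\<^sub>R (d \<times> e)"
    by (rule Lagrange)
  ultimately show ?thesis by simp
qed

definition cremona_weight :: "real^3 \<Rightarrow> real^3 \<Rightarrow> real^3 \<Rightarrow> real^3 \<Rightarrow> real^3 \<Rightarrow> real" where
  "cremona_weight a b c d e = det3 a b c * (det3 a b d * det3 a d c * det3 d b c)
     * (det3 a b e * det3 a e c * det3 e b c) * (det3 d e a * det3 d e b * det3 d e c)"

lemma cremona_cross_components:
  "(cremona a b c d \<times> cremona a b c e)$1 = det3 a b d * det3 a b e * (det3 a b c * det3 d e c)"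
  "(cremona a b c d \<times> cremona a b c e)$2 = det3 a d c * det3 a e c * (det3 a b c * det3 d e b)"
  "(cremona a b c d \<times> cremona a b c e)$3 = det3 d b c * det3 e b c * (det3 a b c * det3 d e a)"
proof -
  have "det3 d b c * det3 a e c - det3 a d c * det3 e b c = det3 a b c * det3 d e c"
    "det3 a b d * det3 e b c - det3 d b c * det3 a b e = det3 a b c * det3 d e b"
    "det3 a d c * det3 a b e - det3 a b d * det3 a e c = det3 a b c * det3 d e a"
    unfolding det3_expand by (simp_all add: algebra_simps)
  moreover have "(cremona a b c d \<times> cremona a b c e)$1
      = det3 a b d * det3 a b e * (det3 d b c * det3 a e c - det3 a d c * det3 e b c)"
    "(cremona a b c d \<times> cremona a b c e)$2
      = det3 a d c * det3 a e c * (det3 a b d * det3 e b c - det3 d b c * det3 a b e)"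
    "(cremona a b c d \<times> cremona a b c e)$3
      = det3 d b c * det3 e b c * (det3 a d c * det3 a b e - det3 a b d * det3 a e c)"
    unfolding cross_components cremona_def by (simp_all add: algebra_simps)
  ultimately show
    "(cremona a b c d \<times> cremona a b c e)$1 = det3 a b d * det3 a b e * (det3 a b c * det3 d e c)"
    "(cremona a b c d \<times> cremona a b c e)$2 = det3 a d c * det3 a e c * (det3 a b c * det3 d e b)"
    "(cremona a b c d \<times> cremona a b c e)$3 = det3 d b c * det3 e b c * (det3 a b c * det3 d e a)"
    by simp_all
qed

lemma cremona_cross_prod:
  "(cremona a b c d \<times> cremona a b c e)$1 * (cremona a b c d \<times> cremona a b c e)$2
     * (cremona a b c d \<times> cremona a b c e)$3 = (det3 a b c)\<^sup>2 * cremona_weight a b c d e"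
  unfolding cremona_cross_components cremona_weight_def by (simp add: algebra_simps power2_eq_square)

lemma cremona_line_parallel:
  assumes conic: "conic_through A {a, b, c, d, e}" and weight: "cremona_weight a b c d e \<noteq> 0"
  obtains l where "l \<noteq> 0" "cremona_line A a b c = l *\<^sub>R (cremona a b c d \<times> cremona a b c e)"
proof -
  let ?D = "cremona a b c d" and ?E = "cremona a b c e" and ?L = "cremona_line A a b c"
  let ?W = "?D \<times> ?E"
  have sym: "transpose A = A" and "A \<noteq> 0" and zero: "qf A a = 0" "qf A b = 0" "qf A c = 0"
    and "qf A d = 0" "qf A e = 0"
    using conic unfolding conic_through_def by auto
  note frame = qf_cremona_frame[OF sym zero]
  have "det3 a b c \<noteq> 0" using weight by (auto simp: cremona_weight_def)
  then have "?L \<bullet> ?D = 0" "?L \<bullet> ?E = 0"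
    using frame[of d] frame[of e] \<open>qf A d = 0\<close> \<open>qf A e = 0\<close> by simp_all
  then have par: "(?W \<bullet> ?W) *\<^sub>R ?L = (?W \<bullet> ?L) *\<^sub>R ?W"
    by (rule parallel_cross_if_orthogonal)
  have "?W$1 \<noteq> 0" using weight by (auto simp: cremona_cross_components cremona_weight_def)
  then have "?W \<noteq> 0" by auto
  then have W: "?W \<bullet> ?W \<noteq> 0" by simp
  define l where "l = (?W \<bullet> ?L) / (?W \<bullet> ?W)"
  have "?L = inverse (?W \<bullet> ?W) *\<^sub>R ((?W \<bullet> ?W) *\<^sub>R ?L)" using W by simp
  also have "\<dots> = l *\<^sub>R ?W" unfolding par l_def by (simp add: divide_inverse mult.commute)
  finally have L: "?L = l *\<^sub>R ?W" .
  have "l \<noteq> 0"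
  proof
    assume "l = 0"
    then have "qf A x = 0" for x using frame[of x] L \<open>det3 a b c \<noteq> 0\<close> by simp
    with sym \<open>A \<noteq> 0\<close> show False using symmetric_eq_0_if_qf_eq_0 by blast
  qed
  with L show thesis using that by blast
qed

lemma conic_cremona_form:
  assumes conic: "conic_through A {a, b, c, d, e}" and weight: "cremona_weight a b c d e \<noteq> 0"
  obtains l where "l \<noteq> 0"
    and "\<And>x. (det3 a b c)\<^sup>2 * qf A x
           = 2 * l * det3 (cremona a b c d) (cremona a b c e) (cremona a b c x)"
    and "det A = 2 * l ^ 3 * cremona_weight a b c d e"
proof -
  obtain l where "l \<noteq> 0" and L: "cremona_line A a b c = l *\<^sub>R (cremona a b c d \<times> cremona a b c e)"
    using cremona_line_parallel[OF assms] .
  have sym: "transpose A = A" and zero: "qf A a = 0" "qf A b = 0" "qf A c = 0"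
    using conic unfolding conic_through_def by auto
  have qx: "(det3 a b c)\<^sup>2 * qf A x
      = 2 * l * det3 (cremona a b c d) (cremona a b c e) (cremona a b c x)" for x
    unfolding qf_cremona_frame[OF sym zero] L by (simp add: det3_eq_cross)
  let ?W = "cremona a b c d \<times> cremona a b c e"
  have "(det3 a b c)\<^sup>2 * det A = 2 * l ^ 3 * (?W$1 * ?W$2 * ?W$3)"
    unfolding det_cremona_frame[OF sym zero] L by (simp add: power3_eq_cube algebra_simps)
  also have "\<dots> = (det3 a b c)\<^sup>2 * (2 * l ^ 3 * cremona_weight a b c d e)"
    unfolding cremona_cross_prod by (simp add: algebra_simps)
  finally have "det A = 2 * l ^ 3 * cremona_weight a b c d e"
    using weight by (simp add: cremona_weight_def)
  with \<open>l \<noteq> 0\<close> qx show thesis by (rule that)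
qed

lemma qf_eq_0_iff_cremona:
  assumes "conic_through A {a, b, c, d, e}" and "cremona_weight a b c d e \<noteq> 0"
  shows "qf A x = 0 \<longleftrightarrow> det3 (cremona a b c d) (cremona a b c e) (cremona a b c x) = 0"
proof -
  obtain l where "l \<noteq> 0" and "(det3 a b c)\<^sup>2 * qf A x
      = 2 * l * det3 (cremona a b c d) (cremona a b c e) (cremona a b c x)"
    using conic_cremona_form[OF assms] by metis
  moreover have "det3 a b c \<noteq> 0" using assms(2) by (auto simp: cremona_weight_def)
  ultimately show ?thesis by (metis mult_eq_0_iff power_not_zero zero_neq_numeral)
qed

lemma outside_conic_iff_cremona:
  assumes "conic_through A {a, b, c, d, e}" and "cremona_weight a b c d e \<noteq> 0"
  shows "outside_conic A x
    \<longleftrightarrow> det3 (cremona a b c d) (cremona a b c e) (cremona a b c x) * cremona_weight a b c d e < 0"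
proof -
  let ?G = "det3 (cremona a b c d) (cremona a b c e) (cremona a b c x)"
  obtain l where "l \<noteq> 0" and q: "(det3 a b c)\<^sup>2 * qf A x = 2 * l * ?G"
    and d: "det A = 2 * l ^ 3 * cremona_weight a b c d e"
    using conic_cremona_form[OF assms] by metis
  have "det3 a b c \<noteq> 0" using assms(2) by (auto simp: cremona_weight_def)
  have "(det3 a b c)\<^sup>2 * (qf A x * det A) = (4 * l ^ 4) * (?G * cremona_weight a b c d e)"
    using q d by (simp add: algebra_simps power4_eq_xxxx power3_eq_cube)
  moreover have "0 < (det3 a b c)\<^sup>2" "0 < 4 * l ^ 4"
    using \<open>det3 a b c \<noteq> 0\<close> \<open>l \<noteq> 0\<close> by simp_all
  ultimately show ?thesis
    unfolding outside_conic_def by (metis mult_less_0_iff not_square_less_zero zero_less_mult_iff)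
qed

section \<open>Pencils of conics through four points\<close>

definition line_pair :: "real^3 \<Rightarrow> real^3 \<Rightarrow> real^3^3" where
  "line_pair n m = (\<chi> i j. (n$i * m$j + m$i * n$j) / 2)"

lemma line_pair_symmetric: "transpose (line_pair n m) = line_pair n m"
  unfolding line_pair_def transpose_def vec_eq_iff by (simp add: algebra_simps)

lemma qf_line_pair: "qf (line_pair n m) x = (n \<bullet> x) * (m \<bullet> x)"
  unfolding qf_eq_polar polar_expand line_pair_def inner_vec_def sum_3 by (simp add: algebra_simps)

lemma conic_through_five:
  assumes "det3 a b e \<noteq> 0" "det3 c d e \<noteq> 0" "det3 a c b \<noteq> 0" "det3 b d a \<noteq> 0"
  shows "\<exists>A. conic_through A {a, b, c, d, e}"
proof -
  \<comment> \<open>the member through e of the pencil spanned by the line pairs (ab)(cd) and (ac)(bd)\<close>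
  define A where "A = (det3 a c e * det3 b d e) *\<^sub>R line_pair (a \<times> b) (c \<times> d)
    - (det3 a b e * det3 c d e) *\<^sub>R line_pair (a \<times> c) (b \<times> d)"
  have q: "qf A x = det3 a c e * det3 b d e * (det3 a b x * det3 c d x)
      - det3 a b e * det3 c d e * (det3 a c x * det3 b d x)" for x
    unfolding A_def qf_diff qf_scaleR_matrix qf_line_pair by (simp add: det3_eq_cross)
  have "transpose A = A"
    unfolding A_def by (simp add: transpose_def line_pair_def vec_eq_iff algebra_simps)
  moreover have "qf A x = 0" if "x \<in> {a, b, c, d, e}" for x
    using that unfolding q by (auto simp: det3_repeat)
  moreover have "qf A (a + b) = - (det3 a b e * det3 c d e * (det3 a c b * det3 b d a))"
    unfolding q det3_add3 by (simp add: det3_repeat)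
  then have "qf A (a + b) \<noteq> 0" using assms by simp
  then have "A \<noteq> 0" by (auto simp: qf_def)
  ultimately show ?thesis unfolding conic_through_def by blast
qed

lemma cremona_three_term:
  assumes "transpose M = M" "qf M a = 0" "qf M b = 0" "qf M c = 0" "qf M d = 0"
    and "det3 a b c \<noteq> 0"
  defines "C \<equiv> cremona a b c"
  shows "qf M x * det3 (C d) (C y) (C z) - qf M y * det3 (C d) (C x) (C z)
    + qf M z * det3 (C d) (C x) (C y) = 0"
proof -
  let ?L = "cremona_line M a b c"
  have frame: "(det3 a b c)\<^sup>2 * qf M u = 2 * (?L \<bullet> C u)" for u
    unfolding C_def by (rule qf_cremona_frame[OF assms(1-4)])
  have "?L \<bullet> C d = 0" using frame[of d] assms(5,6) by simp
  moreover have "(?L \<bullet> C x) * det3 (C d) (C y) (C z) - (?L \<bullet> C y) * det3 (C d) (C x) (C z)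
      + (?L \<bullet> C z) * det3 (C d) (C x) (C y) - (?L \<bullet> C d) * det3 (C x) (C y) (C z) = 0"
    unfolding det3_expand inner_vec_def sum_3 by (simp add: algebra_simps)
  ultimately have "((det3 a b c)\<^sup>2 * qf M x) * det3 (C d) (C y) (C z)
      - ((det3 a b c)\<^sup>2 * qf M y) * det3 (C d) (C x) (C z)
      + ((det3 a b c)\<^sup>2 * qf M z) * det3 (C d) (C x) (C y) = 0"
    unfolding frame by simp
  then have "(det3 a b c)\<^sup>2 * (qf M x * det3 (C d) (C y) (C z)
      - qf M y * det3 (C d) (C x) (C z) + qf M z * det3 (C d) (C x) (C y)) = 0"
    by (simp add: algebra_simps)
  with assms(6) show ?thesis by simp
qed

lemma line_pair_three_term:
  fixes a b c d x y z :: "real^3"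
  assumes "det3 a b c \<noteq> 0"
  defines "M \<equiv> \<lambda>u. det3 a b u * det3 c d u" and "C \<equiv> cremona a b c"
  shows "M x * det3 (C d) (C y) (C z) - M y * det3 (C d) (C x) (C z)
    + M z * det3 (C d) (C x) (C y) = 0"
proof -
  let ?P = "line_pair (a \<times> b) (c \<times> d)"
  have "qf ?P u = M u" for u unfolding M_def qf_line_pair by (simp add: det3_eq_cross)
  moreover have "qf ?P u = 0" if "u \<in> {a, b, c, d}" for u
    using that unfolding \<open>qf ?P u = M u\<close> M_def by (auto simp: det3_repeat)
  ultimately show ?thesis
    using cremona_three_term[where M = ?P and d = d and x = x and y = y and z = z,
        OF line_pair_symmetric _ _ _ _ assms(1)]
    by (simp add: C_def)
qed

lemma cremona_weight_factor:
  "cremona_weight a b c d e = - (det3 a b c * det3 a b d * det3 a d c * det3 d b c)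
     * (det3 a b e * det3 a c e * det3 b c e * det3 a d e * det3 b d e * det3 c d e)"
proof -
  have "det3 a e c = - det3 a c e" "det3 e b c = det3 b c e" "det3 d e a = det3 a d e"
    "det3 d e b = det3 b d e" "det3 d e c = det3 c d e"
    unfolding det3_expand by (simp_all add: algebra_simps)
  then show ?thesis unfolding cremona_weight_def by (simp add: ac_simps)
qed

lemma cremona_weight_mult_pos:
  assumes "det3 a b c \<noteq> 0" "det3 a b d \<noteq> 0" "det3 a c d \<noteq> 0" "det3 b c d \<noteq> 0"
    and "0 < det3 a b x * det3 a b y" "0 < det3 a c x * det3 a c y" "0 < det3 a d x * det3 a d y"
    and "0 < det3 b c x * det3 b c y" "0 < det3 b d x * det3 b d y" "0 < det3 c d x * det3 c d y"
  shows "0 < cremona_weight a b c d x * cremona_weight a b c d y"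
proof -
  let ?F = "det3 a b c * det3 a b d * det3 a d c * det3 d b c"
  have "det3 a d c = - det3 a c d" "det3 d b c = det3 b c d"
    unfolding det3_expand by (simp_all add: algebra_simps)
  then have "?F \<noteq> 0" using assms(1-4) by simp
  have "cremona_weight a b c d x * cremona_weight a b c d y = ?F\<^sup>2
      * ((det3 a b x * det3 a b y) * (det3 a c x * det3 a c y) * (det3 a d x * det3 a d y)
        * (det3 b c x * det3 b c y) * (det3 b d x * det3 b d y) * (det3 c d x * det3 c d y))"
    unfolding cremona_weight_factor by (simp add: power2_eq_square ac_simps)
  with \<open>?F \<noteq> 0\<close> assms(5-10) show ?thesis by simp
qed

lemma outside_conic_swap:
  assumes A: "conic_through A {a, b, c, d, y}" and B: "conic_through B {a, b, c, d, x}"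
    and "qf A x \<noteq> 0" and weights: "0 < cremona_weight a b c d x * cremona_weight a b c d y"
  shows "outside_conic A x \<longleftrightarrow> \<not> outside_conic B y"
proof -
  let ?C = "cremona a b c" and ?wx = "cremona_weight a b c d x" and ?wy = "cremona_weight a b c d y"
  let ?G = "det3 (?C d) (?C y) (?C x)"
  have "?wx \<noteq> 0" "?wy \<noteq> 0" using weights by auto
  have "?G \<noteq> 0" using qf_eq_0_iff_cremona[OF A \<open>?wy \<noteq> 0\<close>] \<open>qf A x \<noteq> 0\<close> by simp
  have "outside_conic A x \<longleftrightarrow> ?G * ?wy < 0"
    by (rule outside_conic_iff_cremona[OF A \<open>?wy \<noteq> 0\<close>])
  moreover have "outside_conic B y \<longleftrightarrow> 0 < ?G * ?wx"
    using outside_conic_iff_cremona[OF B \<open>?wx \<noteq> 0\<close>, of y]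
    by (simp add: det3_swap23[of "?C d" "?C y" "?C x"])
  ultimately show ?thesis
    using weights \<open>?G \<noteq> 0\<close> \<open>?wx \<noteq> 0\<close> by (auto simp: zero_less_mult_iff mult_less_0_iff)
qed

lemma three_terms_not_alternating:
  fixes p1 p2 p3 g1 g2 g3 :: real
  assumes "p1 * g1 - p2 * g2 + p3 * g3 = 0" "0 < p1" "0 < p2" "0 < p3"
  shows "\<not> (g1 < 0 \<and> 0 < g2 \<and> g3 < 0)" "\<not> (0 < g1 \<and> g2 < 0 \<and> 0 < g3)"
proof -
  show "\<not> (g1 < 0 \<and> 0 < g2 \<and> g3 < 0)"
  proof
    assume "g1 < 0 \<and> 0 < g2 \<and> g3 < 0"
    then have "p1 * g1 < 0" "0 < p2 * g2" "p3 * g3 < 0" using assms by (simp_all add: mult_pos_neg)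
    with assms(1) show False by linarith
  qed
  show "\<not> (0 < g1 \<and> g2 < 0 \<and> 0 < g3)"
  proof
    assume "0 < g1 \<and> g2 < 0 \<and> 0 < g3"
    then have "0 < p1 * g1" "p2 * g2 < 0" "0 < p3 * g3" using assms by (simp_all add: mult_pos_neg)
    with assms(1) show False by linarith
  qed
qed

lemma outside_conic_pencil:
  assumes A: "conic_through A {a, b, c, d, z}" and B: "conic_through B {a, b, c, d, y}"
    and "qf A x \<noteq> 0" "qf A y \<noteq> 0" "qf B x \<noteq> 0"
  defines "M \<equiv> \<lambda>u. det3 a b u * det3 c d u"
  assumes sign_xy: "0 < M x * M y"
    and sign_xz: "0 < M x * M z * (cremona_weight a b c d y * cremona_weight a b c d z)"
  shows "\<not> (outside_conic A y \<noteq> outside_conic A x \<and> outside_conic A x \<noteq> outside_conic B x)"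
proof -
  let ?C = "cremona a b c" and ?wy = "cremona_weight a b c d y" and ?wz = "cremona_weight a b c d z"
  let ?G1 = "det3 (?C d) (?C z) (?C y)" and ?G2 = "det3 (?C d) (?C z) (?C x)"
    and ?G3 = "det3 (?C d) (?C y) (?C x)"
  have "?wy \<noteq> 0" "?wz \<noteq> 0" "M x \<noteq> 0" using sign_xz by auto
  have "det3 a b c \<noteq> 0" using \<open>?wy \<noteq> 0\<close> by (auto simp: cremona_weight_def)
  have "?G1 \<noteq> 0" "?G2 \<noteq> 0" "?G3 \<noteq> 0"
    using qf_eq_0_iff_cremona[OF A \<open>?wz \<noteq> 0\<close>] qf_eq_0_iff_cremona[OF B \<open>?wy \<noteq> 0\<close>] assms(3-5)
    by auto
  have out: "outside_conic A y \<longleftrightarrow> ?G1 * ?wz < 0" "outside_conic A x \<longleftrightarrow> ?G2 * ?wz < 0"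
    "outside_conic B x \<longleftrightarrow> ?G3 * ?wy < 0"
    using outside_conic_iff_cremona[OF A \<open>?wz \<noteq> 0\<close>] outside_conic_iff_cremona[OF B \<open>?wy \<noteq> 0\<close>]
    by auto
  \<comment> \<open>the sign hypotheses give the three terms of this identity one common sign when the
    outside relations alternate\<close>
  have "M x * det3 (?C d) (?C y) (?C z) - M y * det3 (?C d) (?C x) (?C z)
      + M z * det3 (?C d) (?C x) (?C y) = 0"
    unfolding M_def by (rule line_pair_three_term[OF \<open>det3 a b c \<noteq> 0\<close>])
  then have "M x * ?G1 - M y * ?G2 + M z * ?G3 = 0"
    by (simp add: det3_swap23[of "?C d" "?C z" "?C y"] det3_swap23[of "?C d" "?C z" "?C x"]
        det3_swap23[of "?C d" "?C y" "?C x"] algebra_simps)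
  then have "(M x * ?wz * ?wy\<^sup>2) * (M x * ?G1 - M y * ?G2 + M z * ?G3) = 0" by simp
  then have sum: "((M x)\<^sup>2 * ?wy\<^sup>2) * (?G1 * ?wz) - (M x * M y * ?wy\<^sup>2) * (?G2 * ?wz)
      + (M x * M z * (?wy * ?wz)) * (?G3 * ?wy) = 0"
    by (simp add: algebra_simps power2_eq_square)
  have "0 < (M x)\<^sup>2 * ?wy\<^sup>2" "0 < M x * M y * ?wy\<^sup>2"
    using \<open>M x \<noteq> 0\<close> \<open>?wy \<noteq> 0\<close> sign_xy by simp_all
  note signs = three_terms_not_alternating[OF sum this sign_xz]
  show ?thesis
  proof
    assume "outside_conic A y \<noteq> outside_conic A x \<and> outside_conic A x \<noteq> outside_conic B x"
    then have "(?G1 * ?wz < 0 \<and> 0 < ?G2 * ?wz \<and> ?G3 * ?wy < 0)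
        \<or> (0 < ?G1 * ?wz \<and> ?G2 * ?wz < 0 \<and> 0 < ?G3 * ?wy)"
      using out \<open>?G1 \<noteq> 0\<close> \<open>?G2 \<noteq> 0\<close> \<open>?G3 \<noteq> 0\<close> \<open>?wy \<noteq> 0\<close> \<open>?wz \<noteq> 0\<close>
      by (metis linorder_neqE_linordered_idom mult_eq_0_iff)
    with signs show False by blast
  qed
qed

section \<open>Heptagons\<close>

lemma exhaust_7:
  fixes x :: 7
  shows "x = 0 \<or> x = 1 \<or> x = 2 \<or> x = 3 \<or> x = 4 \<or> x = 5 \<or> x = 6"
proof (induct x)
  case (of_int z)
  then have "z = 0 \<or> z = 1 \<or> z = 2 \<or> z = 3 \<or> z = 4 \<or> z = 5 \<or> z = 6" by fastforce
  then show ?case by auto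
qed

lemma forall_7: "(\<forall>i::7. P i) \<longleftrightarrow> P 0 \<and> P 1 \<and> P 2 \<and> P 3 \<and> P 4 \<and> P 5 \<and> P 6"
  by (metis exhaust_7)

(* simp adds numerals of type 7 without reducing the result modulo 7 *)
lemma numeral_7_reduce: "(7::7) = 0" "(8::7) = 1" "(9::7) = 2" "(10::7) = 3"
  by simp_all

lemmas less_7_numeral = less_bit1_def bit1.Rep_numeral bit1.Rep_0 bit1.Rep_1

(* Cyclic order of indices; sgn_det3 turns the sign of a bracket of vertices into it, and simp
   decides it on numerals with less_7_numeral. *)
definition ccw :: "7 \<Rightarrow> 7 \<Rightarrow> 7 \<Rightarrow> bool" where
  "ccw a b c \<longleftrightarrow> a < b \<and> b < c \<or> b < c \<and> c < a \<or> c < a \<and> a < b"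

lemma ccw_succ:
  assumes "s \<notin> {k, k + 1}" "t \<notin> {k, k + 1}"
  shows "ccw s t k \<longleftrightarrow> ccw s t (k + 1)"
  using assms exhaust_7[of k] exhaust_7[of s] exhaust_7[of t]
  by (elim disjE) (simp_all add: ccw_def less_7_numeral)

lemma UNIV_7_eq_distinct:
  assumes "distinct [a, b, c, d, e, f, g :: 7]"
  shows "UNIV = {a, b, c, d, e, f, g}"
  using assms by (intro card_subset_eq[symmetric]) (simp_all add: card_insert_if)

lemma obtain_distinct_list:
  assumes "finite S" and "card S = n"
  obtains xs where "distinct xs" "set xs = S" "length xs = n"
  using finite_distinct_list[OF assms(1)] assms(2) by (metis distinct_card)

lemma dd_cases: "dd p u v = 0 \<or> dd p u v = 1"
  by (simp add: dd_def)

lemma image_comp_Diff_bij: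
  assumes "bij \<pi>"
  shows "(q \<circ> \<pi>) ` (UNIV - S) = q ` (UNIV - \<pi> ` S)"
  using assms by (metis bij_image_Compl_eq Compl_eq_Diff_UNIV image_comp)

lemma dd_reindex:
  assumes "bij \<pi>"
  shows "dd (q \<circ> \<pi>) i j = dd q (\<pi> i) (\<pi> j)"
  unfolding dd_def Qconic_def image_comp_Diff_bij[OF assms] by simp

lemma dom_index_reindex:
  assumes "bij \<pi>"
  shows "dom_index (q \<circ> \<pi>) i = dom_index q (\<pi> i)"
proof -
  have "\<pi> ` (UNIV - {i}) = UNIV - {\<pi> i}"
    using assms by (simp add: image_set_diff bij_is_inj bij_is_surj)
  moreover have "inj_on \<pi> (UNIV - {i})" using assms by (meson bij_is_inj inj_on_subset subset_UNIV)
  ultimately show ?thesis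
    unfolding dom_index_def dd_reindex[OF assms] by (metis (no_types) sum.reindex_cong)
qed

lemma conic_through_scaleR_iff:
  assumes "\<forall>k. c k \<noteq> (0::real)"
  shows "conic_through A ((\<lambda>k. c k *\<^sub>R p k) ` S) \<longleftrightarrow> conic_through A (p ` S)"
  using assms unfolding conic_through_def by (auto simp: qf_scaleR)

lemma dd_scaleR:
  assumes "\<forall>k. c k \<noteq> (0::real)"
  shows "dd (\<lambda>k. c k *\<^sub>R p k) i j = dd p i j"
proof -
  have "Qconic (\<lambda>k. c k *\<^sub>R p k) i j = Qconic p i j"
    unfolding Qconic_def conic_through_scaleR_iff[OF assms] ..
  moreover have "0 < (c i)\<^sup>2" using assms by simp
  ultimately show ?thesis
    unfolding dd_def outside_conic_def qf_scaleR by (simp add: mult.assoc zero_less_mult_iff mult_less_0_iff)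
qed

lemma dom_index_scaleR:
  assumes "\<forall>k. c k \<noteq> (0::real)"
  shows "dom_index (\<lambda>k. c k *\<^sub>R p k) i = dom_index p i"
  unfolding dom_index_def dd_scaleR[OF assms] ..

lemma dom_index_nonconstant:
  assumes "dom_index p i \<notin> {0, 6}" and "j \<noteq> i"
  obtains k where "k \<noteq> i" "dd p i k \<noteq> dd p i j"
proof -
  have "\<exists>k. k \<noteq> i \<and> dd p i k \<noteq> dd p i j"
  proof (rule ccontr)
    assume "\<nexists>k. k \<noteq> i \<and> dd p i k \<noteq> dd p i j"
    then have "dom_index p i = (\<Sum>k \<in> UNIV - {i}. dd p i j)"
      unfolding dom_index_def by (intro sum.cong) auto
    also have "\<dots> = 6 * dd p i j" by (simp add: card_Diff_subset)
    finally show False using assms(1) dd_cases[of p i j] by auto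
  qed
  with that show thesis by blast
qed

(* The convexity condition of heptagonal_cyclic once the representatives are rescaled onto one
   affine plane (typical_heptagonal_normalize). *)
definition convex_heptagon :: "(7 \<Rightarrow> real^3) \<Rightarrow> bool" where
  "convex_heptagon q \<longleftrightarrow> (\<forall>k m. m \<noteq> k \<and> m \<noteq> k + 1 \<longrightarrow> 0 < det3 (q k) (q (k + 1)) (q m))"

locale typical_convex_heptagon =
  fixes q :: "7 \<Rightarrow> real^3"
  assumes convex: "convex_heptagon q"
    and no_six_on_conic: "\<not> conic_through A (q ` (UNIV - {m}))"
begin

lemma edge_pos: "m \<noteq> k \<Longrightarrow> m \<noteq> k + 1 \<Longrightarrow> 0 < det3 (q k) (q (k + 1)) (q m)"
  using convex unfolding convex_heptagon_def by blast

lemma det3_pos_increasing: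
  assumes "a < b" "b < c"
  shows "0 < det3 (q a) (q b) (q c)"
proof -
  have skip: "0 < det3 (q k) (q (k + 2)) (q (k + 4))" for k
  proof (rule det3_pos_fan_trans[where e = "q (k + 1)" and v = "q (k + 3)"])
    show "0 \<le> det3 (q k) (q (k + 1)) (q (k + 2))" "0 < det3 (q k) (q (k + 1)) (q (k + 3))"
      "0 < det3 (q k) (q (k + 1)) (q (k + 4))"
      using edge_pos[of "k + 2" k] edge_pos[of "k + 3" k] edge_pos[of "k + 4" k] by simp_all
    show "0 < det3 (q k) (q (k + 2)) (q (k + 3))" "0 < det3 (q k) (q (k + 3)) (q (k + 4))"
      using edge_pos[of k "k + 2"] edge_pos[of k "k + 3"] by (simp_all add: det3_rotate add.assoc)
  qed
  \<comment> \<open>every increasing triple is a rotation of (k, k + 1, m) or of (k, k + 2, k + 4)\<close>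
  have "\<forall>k m. m \<noteq> k \<and> m \<noteq> k + 1 \<longrightarrow> 0 < det3 (q k) (q (k + 1)) (q m)
      \<and> 0 < det3 (q m) (q k) (q (k + 1)) \<and> 0 < det3 (q (k + 1)) (q m) (q k)"
    using edge_pos det3_rotate by metis
  note edges = this[unfolded forall_7, simplified, unfolded numeral_7_reduce]
  have "\<forall>k. 0 < det3 (q k) (q (k + 2)) (q (k + 4)) \<and> 0 < det3 (q (k + 2)) (q (k + 4)) (q k)
      \<and> 0 < det3 (q (k + 4)) (q k) (q (k + 2))"
    using skip det3_rotate by metis
  note skips = this[unfolded forall_7, simplified, unfolded numeral_7_reduce]
  have "\<forall>a b c. a < b \<longrightarrow> b < c \<longrightarrow> 0 < det3 (q a) (q b) (q c)"
    unfolding forall_7 by (simp add: less_7_numeral edges skips)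
  with assms show ?thesis by blast
qed

lemma sgn_det3:
  assumes "distinct [a, b, c]"
  shows "sgn (det3 (q a) (q b) (q c)) = (if ccw a b c then 1 else -1)"
proof -
  have rot: "det3 (q a) (q b) (q c) = det3 (q b) (q c) (q a)"
    "det3 (q a) (q b) (q c) = det3 (q c) (q a) (q b)"
    unfolding det3_expand by (simp_all add: algebra_simps)
  have swap: "det3 (q a) (q b) (q c) = - det3 (q b) (q a) (q c)"
    "det3 (q a) (q b) (q c) = - det3 (q a) (q c) (q b)"
    "det3 (q a) (q b) (q c) = - det3 (q c) (q b) (q a)"
    unfolding det3_expand by (simp_all add: algebra_simps)
  consider "a < b" "b < c" | "b < c" "c < a" | "c < a" "a < b" | "b < a" "a < c" | "a < c" "c < b"
    | "c < b" "b < a"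
    using assms by (metis distinct_length_2_or_more linorder_neqE)
  then show ?thesis
  proof cases
    case 1 then show ?thesis using det3_pos_increasing[of a b c] by (simp add: ccw_def)
  next
    case 2 then show ?thesis using det3_pos_increasing[of b c a] rot by (simp add: ccw_def)
  next
    case 3 then show ?thesis using det3_pos_increasing[of c a b] rot by (simp add: ccw_def)
  next
    case 4 then show ?thesis using det3_pos_increasing[of b a c] swap by (auto simp: ccw_def)
  next
    case 5 then show ?thesis using det3_pos_increasing[of a c b] swap by (auto simp: ccw_def)
  next
    case 6 then show ?thesis using det3_pos_increasing[of c b a] swap by (auto simp: ccw_def)
  qed
qed

lemma det3_ne_0: "distinct [a, b, c] \<Longrightarrow> det3 (q a) (q b) (q c) \<noteq> 0"
  using sgn_det3[of a b c] by (auto split: if_splits)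

lemma adjacent_same_side:
  assumes "s \<notin> {k, k + 1}" "t \<notin> {k, k + 1}" "s \<noteq> t"
  shows "0 < det3 (q s) (q t) (q k) * det3 (q s) (q t) (q (k + 1))"
  using assms unfolding sgn_1_pos[symmetric] sgn_mult by (simp add: sgn_det3 ccw_succ[OF assms(1,2)])

lemma Qconic_through:
  assumes "u \<noteq> v"
  shows "conic_through (Qconic q u v) (q ` (UNIV - {u, v}))"
proof -
  have "card (UNIV - {u, v}) = 5" using assms by (simp add: card_Diff_subset)
  then obtain xs where xs: "distinct xs" "set xs = UNIV - {u, v}" "length xs = 5"
    by (rule obtain_distinct_list[OF finite])
  from xs(3) obtain a b c d e where abcde: "xs = [a, b, c, d, e]"
    by (auto simp: numeral_eq_Suc length_Suc_conv)
  have "distinct [a, b, c, d, e]" using xs(1) abcde by simp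
  then have "\<exists>A. conic_through A {q a, q b, q c, q d, q e}"
    by (intro conic_through_five det3_ne_0) auto
  moreover have "q ` (UNIV - {u, v}) = {q a, q b, q c, q d, q e}"
    unfolding xs(2)[symmetric] abcde by simp
  ultimately show ?thesis unfolding Qconic_def by (metis someI_ex)
qed

lemma qf_Qconic_ne_0:
  assumes "u \<noteq> v"
  shows "qf (Qconic q u v) (q u) \<noteq> 0"
proof
  assume "qf (Qconic q u v) (q u) = 0"
  moreover have "UNIV - {v} = insert u (UNIV - {u, v})" using assms by auto
  ultimately have "conic_through (Qconic q u v) (q ` (UNIV - {v}))"
    using Qconic_through[OF assms] by (simp add: conic_through_def)
  with no_six_on_conic show False by blast
qed

lemma dd_swap:
  assumes "distinct [u, v, j]"
    and same_side: "\<And>s t. s \<notin> {u, v, j} \<Longrightarrow> t \<notin> {u, v, j} \<Longrightarrow> s \<noteq> t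
      \<Longrightarrow> 0 < det3 (q s) (q t) (q u) * det3 (q s) (q t) (q v)"
  shows "dd q u j + dd q v j = 1"
proof -
  have "card (UNIV - {u, v, j}) = 4" using assms(1) by (simp add: card_Diff_subset)
  then obtain xs where xs: "distinct xs" "set xs = UNIV - {u, v, j}" "length xs = 4"
    by (rule obtain_distinct_list[OF finite])
  from xs(3) obtain a b c d where abcd: "xs = [a, b, c, d]"
    by (auto simp: numeral_eq_Suc length_Suc_conv)
  have dist: "distinct [a, b, c, d, u, v, j]" using xs(1,2) abcd assms(1) by auto
  have frame: "UNIV - {u, j} = {a, b, c, d, v}" "UNIV - {v, j} = {a, b, c, d, u}"
    using xs(2) abcd dist by auto
  have A: "conic_through (Qconic q u j) {q a, q b, q c, q d, q v}"
    and B: "conic_through (Qconic q v j) {q a, q b, q c, q d, q u}"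
    using Qconic_through[of u j] Qconic_through[of v j] dist by (simp_all add: frame)
  have "0 < cremona_weight (q a) (q b) (q c) (q d) (q u) * cremona_weight (q a) (q b) (q c) (q d) (q v)"
    using dist by (intro cremona_weight_mult_pos det3_ne_0 same_side) auto
  then have "outside_conic (Qconic q u j) (q u) \<longleftrightarrow> \<not> outside_conic (Qconic q v j) (q v)"
    using dist by (intro outside_conic_swap[OF A B] qf_Qconic_ne_0) auto
  then show ?thesis unfolding dd_def by simp
qed

lemma dd_add_succ:
  assumes "j \<noteq> i" "j \<noteq> i + 1"
  shows "dd q i j + dd q (i + 1) j = 1"
  using assms by (intro dd_swap adjacent_same_side) auto

lemma dd_pencil:
  assumes "distinct [a, b, c, d, x, y, z]"
  defines "M \<equiv> \<lambda>u. det3 (q a) (q b) (q u) * det3 (q c) (q d) (q u)"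
    and "w \<equiv> cremona_weight (q a) (q b) (q c) (q d)"
  assumes "0 < M x * M y" and "0 < M x * M z * (w (q y) * w (q z))"
  shows "\<not> (dd q y x \<noteq> dd q x y \<and> dd q x y \<noteq> dd q x z)"
proof -
  have "UNIV = {a, b, c, d, x, y, z}" by (rule UNIV_7_eq_distinct[OF assms(1)])
  then have frame: "UNIV - {x, y} = {a, b, c, d, z}" "UNIV - {x, z} = {a, b, c, d, y}"
    using assms(1) by auto
  have "Qconic q y x = Qconic q x y" by (simp add: Qconic_def insert_commute)
  have A: "conic_through (Qconic q x y) {q a, q b, q c, q d, q z}"
    and B: "conic_through (Qconic q x z) {q a, q b, q c, q d, q y}"
    using Qconic_through[of x y] Qconic_through[of x z] assms(1)
    by (simp_all add: frame)
  have "qf (Qconic q x y) (q y) \<noteq> 0"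
    using qf_Qconic_ne_0[of y x] assms(1) \<open>Qconic q y x = Qconic q x y\<close> by auto
  then have "\<not> (outside_conic (Qconic q x y) (q y) \<noteq> outside_conic (Qconic q x y) (q x)
      \<and> outside_conic (Qconic q x y) (q x) \<noteq> outside_conic (Qconic q x z) (q x))"
    using assms(1,4,5) unfolding M_def w_def
    by (intro outside_conic_pencil[OF A B] qf_Qconic_ne_0) auto
  then show ?thesis unfolding dd_def \<open>Qconic q y x = Qconic q x y\<close> by auto
qed

lemma dd_pencil_at_0:
  assumes "z \<notin> {0, 1}"
  shows "\<not> (dd q 1 0 \<noteq> dd q 0 1 \<and> dd q 0 1 \<noteq> dd q 0 z)"
proof -
  note eval = cremona_weight_def sgn_1_pos[where 'a = real, symmetric] sgn_mult sgn_det3 ccw_def less_7_numeral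
  have "\<not> (dd q 1 0 \<noteq> dd q 0 1 \<and> dd q 0 1 \<noteq> dd q 0 2)"
    by (rule dd_pencil[of 3 4 5 6]) (simp_all add: eval)
  moreover have "\<not> (dd q 1 0 \<noteq> dd q 0 1 \<and> dd q 0 1 \<noteq> dd q 0 3)"
    by (rule dd_pencil[of 2 4 5 6]) (simp_all add: eval)
  moreover have "\<not> (dd q 1 0 \<noteq> dd q 0 1 \<and> dd q 0 1 \<noteq> dd q 0 4)"
    by (rule dd_pencil[of 2 3 5 6]) (simp_all add: eval)
  moreover have "\<not> (dd q 1 0 \<noteq> dd q 0 1 \<and> dd q 0 1 \<noteq> dd q 0 5)"
    by (rule dd_pencil[of 2 3 4 6]) (simp_all add: eval)
  moreover have "\<not> (dd q 1 0 \<noteq> dd q 0 1 \<and> dd q 0 1 \<noteq> dd q 0 6)"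
    by (rule dd_pencil[of 2 3 4 5]) (simp_all add: eval)
  ultimately show ?thesis using assms exhaust_7[of z] by auto
qed

lemma dd_succ_sym_at_0:
  assumes "dom_index q 0 \<notin> {0, 6}"
  shows "dd q 0 1 = dd q 1 0"
proof -
  obtain z where "z \<noteq> 0" "dd q 0 z \<noteq> dd q 0 1"
    using dom_index_nonconstant[OF assms, of 1] by auto
  moreover have "z \<noteq> 1" using calculation by auto
  ultimately show ?thesis using dd_pencil_at_0[of z] by auto
qed

lemma rotated: "typical_convex_heptagon (\<lambda>k. q (k + r))"
proof
  show "convex_heptagon (\<lambda>k. q (k + r))"
    unfolding convex_heptagon_def
  proof (intro allI impI)
    fix k m :: 7
    assume "m \<noteq> k \<and> m \<noteq> k + 1"
    then have "0 < det3 (q (k + r)) (q (k + r + 1)) (q (m + r))" by (intro edge_pos) auto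
    then show "0 < det3 (q (k + r)) (q (k + 1 + r)) (q (m + r))" by (simp add: ac_simps)
  qed
  show "\<not> conic_through A ((\<lambda>k. q (k + r)) ` (UNIV - {m}))" for A m
    using no_six_on_conic image_comp_Diff_bij[OF bij_plus_right, of q r "{m}"]
    by (simp add: comp_def)
qed

lemma reflected: "typical_convex_heptagon (\<lambda>k. - q (- k))"
proof
  show "convex_heptagon (\<lambda>k. - q (- k))"
    unfolding convex_heptagon_def
  proof (intro allI impI)
    fix k m :: 7
    assume "m \<noteq> k \<and> m \<noteq> k + 1"
    then have "0 < det3 (q (- k - 1)) (q (- k - 1 + 1)) (q (- m))"
      by (intro edge_pos) (auto simp: algebra_simps)
    moreover have "- (k + 1) = - k - 1" "- k - 1 + 1 = - k" by simp_all
    ultimately show "0 < det3 (- q (- k)) (- q (- (k + 1))) (- q (- m))"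
      using det3_swap[of "q (- k - 1)" "q (- k)" "q (- m)"] by (simp add: det3_uminus)
  qed
  have "(\<lambda>k. - q (- k)) ` (UNIV - {m}) = uminus ` (q \<circ> uminus) ` (UNIV - {m})" for m
    by (simp add: image_image)
  then have "(\<lambda>k. - q (- k)) ` (UNIV - {m}) = uminus ` q ` (UNIV - {- m})" for m
    by (simp only: image_comp_Diff_bij[OF bij_uminus]) simp
  then show "\<not> conic_through A ((\<lambda>k. - q (- k)) ` (UNIV - {m}))" for A m
    using no_six_on_conic[of A "- m"] by (auto simp: conic_through_def qf_uminus)
qed

lemma dd_succ_sym:
  assumes "dom_index q i \<notin> {0, 6}"
  shows "dd q i (i + 1) = dd q (i + 1) i"
proof -
  interpret r: typical_convex_heptagon "\<lambda>k. q (k + i)" by (rule rotated)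
  have "(\<lambda>k. q (k + i)) = q \<circ> (\<lambda>k. k + i)" by (simp add: comp_def)
  then have "dd (\<lambda>k. q (k + i)) a b = dd q (a + i) (b + i)"
    and "dom_index (\<lambda>k. q (k + i)) a = dom_index q (a + i)" for a b
    by (simp_all add: dd_reindex dom_index_reindex bij_plus_right)
  with r.dd_succ_sym_at_0 assms show ?thesis by (simp add: add.commute)
qed

lemma dd_pred_sym:
  assumes "dom_index q i \<notin> {0, 6}"
  shows "dd q (i - 1) i = dd q i (i - 1)"
proof -
  interpret s: typical_convex_heptagon "\<lambda>k. - q (- k)" by (rule reflected)
  have "dd (\<lambda>k. - q (- k)) a b = dd q (- a) (- b)" for a b
    using dd_scaleR[of "\<lambda>_. -1" "q \<circ> uminus" a b] dd_reindex[OF bij_uminus, of q a b] by simp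
  moreover have "dom_index (\<lambda>k. - q (- k)) a = dom_index q (- a)" for a
    using dom_index_scaleR[of "\<lambda>_. -1" "q \<circ> uminus" a] dom_index_reindex[OF bij_uminus, of q a]
    by simp
  ultimately show ?thesis using s.dd_succ_sym[of "- i"] assms by (simp add: algebra_simps)
qed

lemma dd_pred_ne_succ:
  assumes "dom_index q i \<notin> {0, 6}"
  shows "dd q (i - 1) i \<noteq> dd q i (i + 1)"
proof -
  have "0 < det3 (q s) (q t) (q (i + 1)) * det3 (q s) (q t) (q (i - 1))"
    if "s \<notin> {i + 1, i - 1, i}" "t \<notin> {i + 1, i - 1, i}" "s \<noteq> t" for s t
  proof -
    have "0 < det3 (q s) (q t) (q (i - 1)) * det3 (q s) (q t) (q i)"
      using adjacent_same_side[of s "i - 1" t] that by simp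
    moreover have "0 < det3 (q s) (q t) (q i) * det3 (q s) (q t) (q (i + 1))"
      using adjacent_same_side[of s i t] that by simp
    ultimately show ?thesis by (auto simp: zero_less_mult_iff)
  qed
  then have "dd q (i + 1) i + dd q (i - 1) i = 1" by (intro dd_swap) auto
  then show ?thesis using dd_succ_sym[OF assms] dd_cases[of q "i + 1" i] by auto
qed

end

lemma typical_heptagonal_normalize:
  assumes "typical7 p" and "heptagonal_cyclic p"
  obtains c where "\<forall>k. c k \<noteq> 0" and "typical_convex_heptagon (\<lambda>k. c k *\<^sub>R p k)"
proof -
  obtain w \<sigma> where \<sigma>: "\<sigma> \<in> {1, -1}" and w: "\<forall>k. w \<bullet> p k \<noteq> 0"
    and hept: "\<forall>k m. m \<noteq> k \<and> m \<noteq> k + 1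
      \<longrightarrow> \<sigma> * det3 (aff w (p k)) (aff w (p (k + 1))) (aff w (p m)) > 0"
    using assms(2) unfolding heptagonal_cyclic_def by (elim exE conjE) (rule that; assumption)
  define c where "c k = \<sigma> / (w \<bullet> p k)" for k
  have c: "\<forall>k. c k \<noteq> 0" using \<sigma> w by (auto simp: c_def)
  have rep: "c k *\<^sub>R p k = \<sigma> *\<^sub>R aff w (p k)" for k by (simp add: c_def aff_def)
  have "\<sigma> * \<sigma> * \<sigma> = \<sigma>" using \<sigma> by auto
  then have "det3 (c k *\<^sub>R p k) (c (k + 1) *\<^sub>R p (k + 1)) (c m *\<^sub>R p m)
      = \<sigma> * det3 (aff w (p k)) (aff w (p (k + 1))) (aff w (p m))" for k m
    unfolding rep det3_scaleR by simp
  then have "convex_heptagon (\<lambda>k. c k *\<^sub>R p k)"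
    using hept unfolding convex_heptagon_def by presburger
  moreover have "\<not> conic_through A ((\<lambda>k. c k *\<^sub>R p k) ` (UNIV - {m}))" for A m
    using assms(1) unfolding typical7_def conic_through_scaleR_iff[OF c] by blast
  ultimately have "typical_convex_heptagon (\<lambda>k. c k *\<^sub>R p k)"
    by unfold_locales
  with c show thesis by (rule that)
qed

theorem lemma3p3:
  fixes p :: "7 \<Rightarrow> real^3" and i :: 7
  assumes "typical7 p" and "heptagonal_cyclic p"
  shows "(\<forall>j. j \<noteq> i \<and> j \<noteq> i + 1 \<longrightarrow> dd p i j + dd p (i + 1) j = 1)
    \<and> (dom_index p i \<notin> {0, 6} \<longrightarrow> dd p i (i + 1) = dd p (i + 1) i \<and> dd p (i - 1) i = dd p i (i - 1))
    \<and> (dom_index p i \<notin> {0, 6} \<longrightarrow> dd p (i - 1) i \<noteq> dd p i (i + 1))"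
proof -
  obtain c where c: "\<forall>k. c k \<noteq> 0" and q: "typical_convex_heptagon (\<lambda>k. c k *\<^sub>R p k)"
    using typical_heptagonal_normalize[OF assms] .
  interpret typical_convex_heptagon "\<lambda>k. c k *\<^sub>R p k" by (fact q)
  show ?thesis
    using dd_add_succ[of _ i] dd_succ_sym[of i] dd_pred_sym[of i] dd_pred_ne_succ[of i]
    by (simp add: dd_scaleR[OF c] dom_index_scaleR[OF c])
qed

end
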